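(* Let $p$ be a prime and let $G$ be a $2$-tuple regular finite group of exponent $p^s$ for some $s\in\mathbb{N}$. For every $i\in\{0,\ldots,s\}$, every element of $\Omega_i(G)$ has order at most $p^i$ and is a $p^{s-i}$-th power of an element of $G$. In particular, $\Omega_i(G)$ is $2$-tuple regular.
   Context: $\Omega_i(G)$ is the subgroup generated by all elements of order dividing $p^i$. A finite group $G$ is $2$-tuple regular if for all pairs $(g_1,g_2),(h_1,h_2)\in G^2$ (entries may coincide) for which $g_1\mapsto h_1,g_2\mapsto h_2$ defines an isomorphism $\langle g_1,g_2\rangle\to\langle h_1,h_2\rangle$, there is a bijection $\Psi\colon G\to G$ such that for every $g\in G$ the assignment $g_1\mapsto h_1,g_2\mapsto h_2,g\mapsto\Psi(g)$ defines an isomorphism $\langle g_1,g_2,g\rangle\to\langle h_1,h_2,\Psi(g)\rangle$. *)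

theory Defs
  imports "HOL-Algebra.Algebra"
begin

definition group_exponent :: "('a, 'b) monoid_scheme \<Rightarrow> nat" where
  "group_exponent G = Lcm (group.ord G ` carrier G)"

definition Omega :: "('a, 'b) monoid_scheme \<Rightarrow> nat \<Rightarrow> nat \<Rightarrow> 'a set" where
  "Omega G p i = generate G {x \<in> carrier G. x [^]\<^bsub>G\<^esub> (p ^ i) = \<one>\<^bsub>G\<^esub>}"

definition defines_iso :: "('a, 'b) monoid_scheme \<Rightarrow> 'a list \<Rightarrow> 'a list \<Rightarrow> bool" where
  "defines_iso G gs hs \<longleftrightarrow> length gs = length hs \<and>
     (\<exists>\<phi>. \<phi> \<in> iso (G\<lparr>carrier := generate G (set gs)\<rparr>) (G\<lparr>carrier := generate G (set hs)\<rparr>) \<and>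
          (\<forall>k < length gs. \<phi> (gs ! k) = hs ! k))"

definition two_tuple_regular :: "('a, 'b) monoid_scheme \<Rightarrow> bool" where
  "two_tuple_regular G \<longleftrightarrow>
     (\<forall>g1 \<in> carrier G. \<forall>g2 \<in> carrier G. \<forall>h1 \<in> carrier G. \<forall>h2 \<in> carrier G.
        defines_iso G [g1, g2] [h1, h2] \<longrightarrow>
        (\<exists>\<Psi>. bij_betw \<Psi> (carrier G) (carrier G) \<and>
             (\<forall>g \<in> carrier G. defines_iso G [g1, g2, g] [h1, h2, \<Psi> g])))"

end

theory Submission
  imports Defs
begin

text \<open>
  Omega_i(G) is generated by torsion G (p^i), the solutions of x^(p^i) = 1; the point is that
  this set is already a subgroup. In a 2-tuple regular group, elements x and a of equal order come
  with a bijection \<Psi> of G such that x \<mapsto> a, g \<mapsto> \<Psi> g extends to an isomorphism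
  of the generated subgroups for every g (apply regularity to the pair (x, x)), so any relation
  between x and all elements of G is inherited by a.

  Induction on i: let N = torsion G (p^i) \<noteq> G. The p-group G/N has a central element of
  order p, and its lifts y have order p^(i+1) and commute with G modulo N. Every a in
  torsion G (p^(i+1)) outside N has the same order, hence also commutes with G modulo N. So
  torsion G (p^(i+1)), the preimage of the elements of order dividing p of G/N, consists of central
  cosets and is closed under products.

  For the roots take y of order p^s and x of order p^j: the isomorphism sending y^(p^(s-j)) to x
  sends y to some \<Psi> y with x = (\<Psi> y)^(p^(s-j)). Finally \<Psi> preserves element orders,
  hence torsion G (p^i), which makes Omega_i(G) 2-tuple regular.
\<close>

definition commutator :: "('a, 'b) monoid_scheme \<Rightarrow> 'a \<Rightarrow> 'a \<Rightarrow> 'a" where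
  "commutator G g h = g \<otimes>\<^bsub>G\<^esub> h \<otimes>\<^bsub>G\<^esub> inv\<^bsub>G\<^esub> g \<otimes>\<^bsub>G\<^esub> inv\<^bsub>G\<^esub> h"

definition torsion :: "('a, 'b) monoid_scheme \<Rightarrow> nat \<Rightarrow> 'a set" where
  "torsion G n = {x \<in> carrier G. x [^]\<^bsub>G\<^esub> n = \<one>\<^bsub>G\<^esub>}"

lemma prime_power_if_prime_divisors_eq:
  fixes n p :: nat
  assumes p: "Factorial_Ring.prime p" and n: "n \<noteq> 0"
    and divisors: "\<And>q. Factorial_Ring.prime q \<Longrightarrow> q dvd n \<Longrightarrow> q = p"
  shows "\<exists>k. n = p ^ k"
proof -
  obtain m where decomp: "n = p ^ multiplicity p n * m" "\<not> p dvd m"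
    using multiplicity_decompose' n p not_prime_unit by metis
  have "m = 1"
  proof (rule ccontr)
    assume "m \<noteq> 1"
    then obtain q where "Factorial_Ring.prime q" "q dvd m"
      using prime_factor_nat by blast
    then show False
      using divisors[of q] decomp by (metis dvd_mult)
  qed
  then show ?thesis
    using decomp(1) by auto
qed

lemma (in group_action) prime_dvd_card_orbit:
  assumes p: "Factorial_Ring.prime p" and order: "order G = p ^ k"
    and x: "x \<in> E" and nonsingleton: "orbit G \<phi> x \<noteq> {x}"
  shows "p dvd card (orbit G \<phi> x)"
proof -
  have "card (orbit G \<phi> x) dvd p ^ k"
    using orbit_stabilizer_theorem[OF x] order by (metis dvd_triv_left)
  then obtain j where j: "card (orbit G \<phi> x) = p ^ j"
    using divides_primepow_nat[OF p] by blast
  have "j \<noteq> 0"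
  proof
    assume "j = 0"
    then have "card (orbit G \<phi> x) = 1"
      using j by simp
    then show False
      using orbit_refl[OF x] nonsingleton by (metis card_1_singletonE singletonD)
  qed
  then show ?thesis
    using j by simp
qed

lemma bij_betw_invariant_subset:
  assumes bij: "bij_betw f A A" and "B \<subseteq> A" and invariant: "\<And>x. x \<in> A \<Longrightarrow> f x \<in> B \<longleftrightarrow> x \<in> B"
  shows "bij_betw f B B"
proof (rule bij_betw_subset[OF bij \<open>B \<subseteq> A\<close>])
  show "f ` B = B"
  proof
    show "f ` B \<subseteq> B"
      using invariant \<open>B \<subseteq> A\<close> by blast
    show "B \<subseteq> f ` B"
    proof
      fix y assume "y \<in> B"
      moreover obtain x where "x \<in> A" "y = f x"
        using bij \<open>y \<in> B\<close> \<open>B \<subseteq> A\<close> unfolding bij_betw_def by blast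
      ultimately show "y \<in> f ` B"
        using invariant by blast
    qed
  qed
qed

context group begin

lemma commutator_closed [simp]:
  "g \<in> carrier G \<Longrightarrow> h \<in> carrier G \<Longrightarrow> commutator G g h \<in> carrier G"
  by (simp add: commutator_def)

lemma subgroup_commutator_closed:
  assumes "subgroup H G" "x \<in> H" "y \<in> H"
  shows "commutator G x y \<in> H"
  using assms by (simp add: commutator_def subgroup.m_closed subgroup.m_inv_closed)

lemma rcos_swap_eq_iff_commutator:
  assumes "subgroup N G" "g \<in> carrier G" "h \<in> carrier G"
  shows "N #> (g \<otimes> h) = N #> (h \<otimes> g) \<longleftrightarrow> commutator G g h \<in> N"
proof -
  have "(g \<otimes> h) \<otimes> inv (h \<otimes> g) = commutator G g h"
    using assms(2,3) by (simp add: commutator_def inv_mult_group m_assoc)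
  then show ?thesis
    using assms subgroup.rcos_module[OF assms(1) is_group, of "h \<otimes> g" "g \<otimes> h"]
    by (metis m_closed rcos_self repr_independence)
qed

lemma rcos_eq_self_iff:
  assumes "subgroup N G" "x \<in> carrier G"
  shows "N #> x = N \<longleftrightarrow> x \<in> N"
  using coset_join1 coset_join2 assms by blast

lemma commutator_in_normal:
  assumes "N \<lhd> G" "g \<in> carrier G" "a \<in> N"
  shows "commutator G g a \<in> N"
proof -
  interpret normal N G by fact
  have "g \<otimes> a \<otimes> inv g \<in> N" "inv a \<in> N"
    using assms(2,3) inv_op_closed2 by auto
  then show ?thesis
    unfolding commutator_def by simp
qed

lemma generate_subgroup_eq:
  assumes "subgroup H G"
  shows "generate G H = H"
  using generate_subgroup_incl[OF subset_refl assms] generate.incl[of _ H G] by blast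

lemma conj_nat_pow:
  assumes "g \<in> carrier G" "x \<in> carrier G"
  shows "(g \<otimes> x \<otimes> inv g) [^] (n::nat) = g \<otimes> x [^] n \<otimes> inv g"
proof (induction n)
  case (Suc n)
  then show ?case
    using assms by (simp add: m_assoc inv_solve_left')
qed (use assms in simp)

lemma torsion_subset: "torsion G n \<subseteq> carrier G"
  by (auto simp: torsion_def)

lemma torsion_normal:
  assumes "subgroup (torsion G n) G"
  shows "torsion G n \<lhd> G"
  unfolding normal_inv_iff
proof (intro conjI assms ballI)
  fix g h assume "g \<in> carrier G" "h \<in> torsion G n"
  then show "g \<otimes> h \<otimes> inv g \<in> torsion G n"
    by (simp add: torsion_def conj_nat_pow)
qed

lemma ord_eq_prime_power_Suc:
  assumes p: "Factorial_Ring.prime p" and x: "x \<in> carrier G"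
    and "x [^] (p ^ Suc i) = \<one>" "x [^] (p ^ i) \<noteq> \<one>"
  shows "ord x = p ^ Suc i"
proof -
  have "ord x dvd p ^ Suc i"
    using assms(3) pow_eq_id[OF x] by blast
  then obtain j where j: "j \<le> Suc i" "ord x = p ^ j"
    using divides_primepow_nat[OF p] by blast
  have "\<not> j \<le> i"
    using assms(4) j(2) by (auto simp: pow_eq_id[OF x] le_imp_power_dvd)
  then have "j = Suc i"
    using j(1) by simp
  then show ?thesis
    using j(2) by simp
qed

lemma ord_dvd_group_exponent:
  assumes "x \<in> carrier G"
  shows "ord x dvd group_exponent G"
  using assms by (simp add: group_exponent_def dvd_Lcm)

lemma exists_ord_eq_prime_power_exponent:
  fixes p :: nat
  assumes p: "Factorial_Ring.prime p" and exponent: "group_exponent G = p ^ s"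
  shows "\<exists>y \<in> carrier G. ord y = p ^ s"
proof (rule ccontr)
  assume none: "\<not> ?thesis"
  then have "s \<noteq> 0"
    using ord_id one_closed by (metis power_0)
  have "ord x dvd p ^ (s - 1)" if x: "x \<in> carrier G" for x
  proof -
    obtain j where "j \<le> s" "ord x = p ^ j"
      using ord_dvd_group_exponent[OF x] exponent divides_primepow_nat[OF p] by auto
    moreover have "j \<noteq> s"
      using none x \<open>ord x = p ^ j\<close> by blast
    ultimately show ?thesis
      by (simp add: le_imp_power_dvd)
  qed
  then have "Lcm (ord ` carrier G) dvd p ^ (s - 1)"
    by (intro Lcm_least) blast
  then have "p ^ s dvd p ^ (s - 1)"
    using exponent by (simp add: group_exponent_def)
  then show False
    using power_dvd_imp_le[OF _ prime_gt_1_nat[OF p]] \<open>s \<noteq> 0\<close> by fastforce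
qed

subsection \<open>Groups of prime power order\<close>

lemma order_prime_power_if_pow_eq_one:
  assumes fin: "finite (carrier G)" and p: "Factorial_Ring.prime p"
    and exp: "\<And>x. x \<in> carrier G \<Longrightarrow> x [^] (p ^ s) = \<one>"
  shows "\<exists>k. order G = p ^ k"
proof (rule prime_power_if_prime_divisors_eq[OF p])
  show "order G \<noteq> 0"
    using fin order_gt_0_iff_finite by auto
next
  fix q assume q: "Factorial_Ring.prime q" "q dvd order G"
  then obtain m where "order G = q ^ 1 * m"
    by auto
  then obtain H where H: "subgroup H G" "card H = q"
    using sylow_thm[OF q(1) is_group _ fin] by fastforce
  have "\<not> H \<subseteq> {\<one>}"
  proof
    assume "H \<subseteq> {\<one>}"
    then have "card H \<le> 1"
      using card_mono[of "{\<one>}" H] by simp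
    then show False
      using H(2) prime_gt_1_nat[OF q(1)] by simp
  qed
  then obtain h where h: "h \<in> H" "h \<noteq> \<one>"
    by blast
  have h_carrier: "h \<in> carrier G"
    using subgroup.mem_carrier[OF H(1) h(1)] .
  have "h [^] q = \<one>"
    using group.pow_order_eq_1[OF subgroup_imp_group[OF H(1)], of h] h H(2)
    by (simp add: order_def flip: nat_pow_consistent)
  then have "ord h dvd q"
    using pow_eq_id[OF h_carrier] by blast
  moreover have "ord h dvd p ^ s"
    using exp h_carrier pow_eq_id by blast
  ultimately have "q dvd p ^ s"
    using h ord_eq_1[OF h_carrier] q(1) by (auto simp: prime_nat_iff)
  then show "q = p"
    using p q(1) prime_dvd_power_nat primes_dvd_imp_eq by blast
qed

lemma conjugation_orbit_eq_singleton_iff: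
  assumes x: "x \<in> carrier G"
  shows "orbit G (\<lambda>g. \<lambda>h \<in> carrier G. g \<otimes> h \<otimes> inv g) x = {x} \<longleftrightarrow> (\<forall>g \<in> carrier G. x \<otimes> g = g \<otimes> x)"
proof -
  have orbit: "orbit G (\<lambda>g. \<lambda>h \<in> carrier G. g \<otimes> h \<otimes> inv g) x = {g \<otimes> x \<otimes> inv g | g. g \<in> carrier G}"
    using x by (auto simp: orbit_def)
  have "x \<in> {g \<otimes> x \<otimes> inv g | g. g \<in> carrier G}"
    using x by (metis (mono_tags, lifting) inv_one l_one mem_Collect_eq one_closed r_one)
  then have "{g \<otimes> x \<otimes> inv g | g. g \<in> carrier G} = {x} \<longleftrightarrow> (\<forall>g \<in> carrier G. g \<otimes> x \<otimes> inv g = x)"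
    by blast
  moreover have "g \<otimes> x \<otimes> inv g = x \<longleftrightarrow> x \<otimes> g = g \<otimes> x" if "g \<in> carrier G" for g
    using that x inv_solve_right[of x "g \<otimes> x" g] by (metis m_closed)
  ultimately show ?thesis
    unfolding orbit by simp
qed

lemma center_nontrivial_if_order_prime_power:
  assumes fin: "finite (carrier G)" and p: "Factorial_Ring.prime p"
    and order: "order G = p ^ k" and k: "k \<noteq> 0"
  shows "\<exists>z \<in> carrier G. z \<noteq> \<one> \<and> (\<forall>g \<in> carrier G. z \<otimes> g = g \<otimes> z)"
proof (rule ccontr)
  assume no_center: "\<not> ?thesis"
  define \<phi> where "\<phi> g = (\<lambda>h \<in> carrier G. g \<otimes> h \<otimes> inv g)" for g
  interpret conj: group_action G "carrier G" \<phi>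
    unfolding \<phi>_def by (rule action_by_conjugation)
  have singleton_iff: "orbit G \<phi> x = {x} \<longleftrightarrow> (\<forall>g \<in> carrier G. x \<otimes> g = g \<otimes> x)" if "x \<in> carrier G" for x
    unfolding \<phi>_def using conjugation_orbit_eq_singleton_iff[OF that] .
  have orbit_one: "orbit G \<phi> \<one> = {\<one>}"
    using singleton_iff[OF one_closed] by simp
  have "p dvd card orb" if orb: "orb \<in> orbits G (carrier G) \<phi> - {{\<one>}}" for orb
  proof -
    obtain x where x: "x \<in> carrier G" "orb = orbit G \<phi> x"
      using orb by (auto simp: orbits_def)
    have "x \<noteq> \<one>"
      using orb x orbit_one by auto
    then have "orbit G \<phi> x \<noteq> {x}"
      using no_center singleton_iff x(1) by blast
    then show ?thesis
      using conj.prime_dvd_card_orbit[OF p order x(1)] x(2) by simp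
  qed
  then have nontrivial_orbits: "p dvd (\<Sum>orb \<in> orbits G (carrier G) \<phi> - {{\<one>}}. card orb)"
    by (rule dvd_sum)
  have "finite (orbits G (carrier G) \<phi>)"
    using conj.orbits_coverture finite_subset[of _ "Pow (carrier G)"] fin by blast
  moreover have "{\<one>} \<in> orbits G (carrier G) \<phi>"
    using orbit_one by (auto simp: orbits_def)
  moreover have "(\<Sum>orb \<in> orbits G (carrier G) \<phi>. card orb) = order G"
    using conj.disjoint_sum[OF fin, of "\<lambda>_. 1::nat"] by (simp add: order_def)
  ultimately have class_equation: "order G = 1 + (\<Sum>orb \<in> orbits G (carrier G) \<phi> - {{\<one>}}. card orb)"
    by (simp add: sum.remove)
  have "p dvd order G"
    using order k by simp
  then have "p dvd 1"
    using nontrivial_orbits class_equation by (metis dvd_add_left_iff)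
  then show False
    using p by simp
qed

lemma central_element_of_prime_order:
  assumes fin: "finite (carrier G)" and p: "Factorial_Ring.prime p"
    and order: "order G = p ^ k" and k: "k \<noteq> 0"
  shows "\<exists>z \<in> carrier G. ord z = p \<and> (\<forall>g \<in> carrier G. z \<otimes> g = g \<otimes> z)"
proof -
  obtain z where z: "z \<in> carrier G" "z \<noteq> \<one>" and central: "\<forall>g \<in> carrier G. z \<otimes> g = g \<otimes> z"
    using center_nontrivial_if_order_prime_power[OF fin p order k] by blast
  obtain e where e: "ord z = p ^ e"
    using ord_dvd_group_order[OF z(1)] order divides_primepow_nat[OF p] by auto
  have "e \<noteq> 0"
    using e z ord_eq_1 by (metis power_0)
  then have "ord z = p ^ (e - 1) * p"
    using e by (cases e) auto
  then have "ord (z [^] p ^ (e - 1)) = p"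
    using ord_pow[OF z(1), of "p ^ (e - 1)"] prime_gt_0_nat[OF p] by simp
  moreover have "\<forall>g \<in> carrier G. z [^] p ^ (e - 1) \<otimes> g = g \<otimes> z [^] p ^ (e - 1)"
    using central z(1) group_commutes_pow by blast
  ultimately show ?thesis
    using z(1) by blast
qed

lemma FactGroup_order_prime_power:
  fixes p :: nat
  assumes fin: "finite (carrier G)" and p: "Factorial_Ring.prime p"
    and exp: "\<And>x. x \<in> carrier G \<Longrightarrow> x [^] (p ^ s) = \<one>"
    and N: "N \<lhd> G" and proper: "N \<noteq> carrier G"
  obtains k where "k \<noteq> 0" "order (G Mod N) = p ^ k"
proof -
  interpret N: normal N G by (rule N)
  interpret Q: group "G Mod N"
    by (rule N.factorgroup_is_group)
  have "finite (carrier (G Mod N))"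
    using fin by (simp add: carrier_FactGroup)
  moreover have "U [^]\<^bsub>G Mod N\<^esub> (p ^ s) = \<one>\<^bsub>G Mod N\<^esub>" if "U \<in> carrier (G Mod N)" for U
    using that exp N.subset by (auto simp: carrier_FactGroup N.FactGroup_pow)
  ultimately obtain k where k: "order (G Mod N) = p ^ k"
    using Q.order_prime_power_if_pow_eq_one[OF _ p] by blast
  have "k \<noteq> 0"
  proof
    assume "k = 0"
    then have "carrier (G Mod N) = {N}"
      using k Q.one_closed by (metis card_1_singletonE one_FactGroup order_def power_0 singletonD)
    then have "N #> x = N" if "x \<in> carrier G" for x
      using that by (metis carrier_FactGroup imageI singletonD)
    then have "carrier G \<subseteq> N"
      using rcos_eq_self_iff[OF N.subgroup_axioms] by blast
    then show False
      using proper N.subset by blast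
  qed
  with k show ?thesis
    using that by blast
qed

lemma exists_central_mod_normal:
  fixes p :: nat
  assumes fin: "finite (carrier G)" and p: "Factorial_Ring.prime p"
    and exp: "\<And>x. x \<in> carrier G \<Longrightarrow> x [^] (p ^ s) = \<one>"
    and N: "N \<lhd> G" and proper: "N \<noteq> carrier G"
  obtains y where "y \<in> carrier G" "y \<notin> N" "y [^] p \<in> N"
    and "\<And>g. g \<in> carrier G \<Longrightarrow> commutator G g y \<in> N"
proof -
  interpret N: normal N G by (rule N)
  interpret Q: group "G Mod N"
    by (rule N.factorgroup_is_group)
  note coset_eq_N = rcos_eq_self_iff[OF N.subgroup_axioms]
  obtain k where "k \<noteq> 0" "order (G Mod N) = p ^ k"
    using FactGroup_order_prime_power[OF fin p exp N proper] .
  moreover have "finite (carrier (G Mod N))"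
    using fin by (simp add: carrier_FactGroup)
  ultimately obtain Z where Z: "Z \<in> carrier (G Mod N)" "Q.ord Z = p"
    and central: "\<forall>U \<in> carrier (G Mod N). Z \<otimes>\<^bsub>G Mod N\<^esub> U = U \<otimes>\<^bsub>G Mod N\<^esub> Z"
    using Q.central_element_of_prime_order[OF _ p] by blast
  then obtain y where y: "y \<in> carrier G" "Z = N #> y"
    by (auto simp: carrier_FactGroup)
  show ?thesis
  proof (rule that[OF y(1)])
    show "y \<notin> N"
      using Z(2) y coset_eq_N prime_gt_1_nat[OF p] by (metis Q.ord_id one_FactGroup less_irrefl)
    have "Z [^]\<^bsub>G Mod N\<^esub> p = N"
      using Q.pow_ord_eq_1[OF Z(1)] Z(2) by simp
    then show "y [^] p \<in> N"
      using y coset_eq_N by (simp add: N.FactGroup_pow)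
  next
    fix g assume g: "g \<in> carrier G"
    then have "Z \<otimes>\<^bsub>G Mod N\<^esub> (N #> g) = (N #> g) \<otimes>\<^bsub>G Mod N\<^esub> Z"
      using central by (auto simp: carrier_FactGroup)
    then have "N #> (y \<otimes> g) = N #> (g \<otimes> y)"
      using g y by (simp add: N.rcos_sum)
    then show "commutator G g y \<in> N"
      using rcos_swap_eq_iff_commutator[OF N.subgroup_axioms g y(1)] by simp
  qed
qed

lemma pow_preimage_subgroup_if_central_mod:
  assumes N: "N \<lhd> G"
    and central: "\<And>a g. a \<in> carrier G \<Longrightarrow> a [^] (n::nat) \<in> N \<Longrightarrow> g \<in> carrier G \<Longrightarrow> commutator G g a \<in> N"
  shows "subgroup {a \<in> carrier G. a [^] n \<in> N} G"
proof -
  interpret N: normal N G by (rule N)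
  interpret Q: group "G Mod N"
    by (rule N.factorgroup_is_group)
  note coset_eq_N = rcos_eq_self_iff[OF N.subgroup_axioms]
  show ?thesis
  proof (rule subgroupI)
    fix a assume "a \<in> {a \<in> carrier G. a [^] n \<in> N}"
    then show "inv a \<in> {a \<in> carrier G. a [^] n \<in> N}"
      by (simp add: nat_pow_inv N.m_inv_closed)
  next
    fix a b assume a: "a \<in> {a \<in> carrier G. a [^] n \<in> N}" and b: "b \<in> {a \<in> carrier G. a [^] n \<in> N}"
    then have carrier: "a \<in> carrier G" "b \<in> carrier G"
      by auto
    have "N #> (b \<otimes> a) = N #> (a \<otimes> b)"
      using central[of a b] a carrier rcos_swap_eq_iff_commutator[OF N.subgroup_axioms] by simp
    then have "(N #> a) \<otimes>\<^bsub>G Mod N\<^esub> (N #> b) = (N #> b) \<otimes>\<^bsub>G Mod N\<^esub> (N #> a)"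
      using carrier by (simp add: N.rcos_sum)
    then have "((N #> a) \<otimes>\<^bsub>G Mod N\<^esub> (N #> b)) [^]\<^bsub>G Mod N\<^esub> n
        = (N #> a) [^]\<^bsub>G Mod N\<^esub> n \<otimes>\<^bsub>G Mod N\<^esub> (N #> b) [^]\<^bsub>G Mod N\<^esub> n"
      using carrier by (intro Q.pow_mult_distrib) (auto simp: carrier_FactGroup)
    then have "N #> ((a \<otimes> b) [^] n) = N"
      using a b carrier coset_eq_N by (simp add: N.FactGroup_pow N.rcos_sum N.subset)
    then show "a \<otimes> b \<in> {a \<in> carrier G. a [^] n \<in> N}"
      using carrier coset_eq_N by simp
  qed (use N.subset in auto)
qed

subsection \<open>Isomorphisms between subgroups\<close>

lemma iso_subgroups_group_hom:
  assumes "subgroup H G" "subgroup K G" "\<phi> \<in> iso (G\<lparr>carrier := H\<rparr>) (G\<lparr>carrier := K\<rparr>)"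
  shows "group_hom (G\<lparr>carrier := H\<rparr>) (G\<lparr>carrier := K\<rparr>) \<phi>"
  using assms by (simp add: group_hom_def group_hom_axioms_def iso_def subgroup_imp_group)

lemma
  assumes H: "subgroup H G" and K: "subgroup K G"
    and \<phi>: "\<phi> \<in> iso (G\<lparr>carrier := H\<rparr>) (G\<lparr>carrier := K\<rparr>)"
    and x: "x \<in> H"
  shows iso_subgroups_inv: "\<phi> (inv x) = inv (\<phi> x)"
    and iso_subgroups_nat_pow: "\<phi> (x [^] (n::nat)) = \<phi> x [^] n"
    and iso_subgroups_pow_eq_one_iff: "\<phi> x [^] (n::nat) = \<one> \<longleftrightarrow> x [^] n = \<one>"
proof -
  interpret \<phi>: group_hom "G\<lparr>carrier := H\<rparr>" "G\<lparr>carrier := K\<rparr>" \<phi>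
    by (rule iso_subgroups_group_hom[OF H K \<phi>])
  show "\<phi> (inv x) = inv (\<phi> x)"
    using x \<phi>.hom_inv \<phi>.hom_closed by (simp add: m_inv_consistent[OF H] m_inv_consistent[OF K])
  show pow: "\<phi> (x [^] n) = \<phi> x [^] n" for n :: nat
    using x \<phi>.hom_nat_pow by (simp flip: nat_pow_consistent)
  have "x [^] n \<in> H"
    using x \<phi>.G.nat_pow_closed by (simp flip: nat_pow_consistent)
  moreover have "inj_on \<phi> H"
    using \<phi> by (simp add: iso_def bij_betw_def)
  moreover have "\<phi> \<one> = \<one>"
    using \<phi>.hom_one by simp
  ultimately show "\<phi> x [^] n = \<one> \<longleftrightarrow> x [^] n = \<one>"
    using pow[of n] subgroup.one_closed[OF H] by (metis inj_on_eq_iff)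
qed

lemma iso_subgroups_mult:
  assumes "subgroup H G" "subgroup K G" "\<phi> \<in> iso (G\<lparr>carrier := H\<rparr>) (G\<lparr>carrier := K\<rparr>)"
    and "x \<in> H" "y \<in> H"
  shows "\<phi> (x \<otimes> y) = \<phi> x \<otimes> \<phi> y"
  using group_hom.hom_mult[OF iso_subgroups_group_hom[OF assms(1-3)], of x y] assms(4,5) by simp

lemma iso_subgroups_commutator:
  assumes "subgroup H G" "subgroup K G" "\<phi> \<in> iso (G\<lparr>carrier := H\<rparr>) (G\<lparr>carrier := K\<rparr>)"
    and "x \<in> H" "y \<in> H"
  shows "\<phi> (commutator G x y) = commutator G (\<phi> x) (\<phi> y)"
  using assms subgroup.m_closed[OF assms(1)] subgroup.m_inv_closed[OF assms(1)]
  by (simp add: commutator_def iso_subgroups_mult iso_subgroups_inv)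

lemma cyclic_subgroups_iso:
  assumes x: "x \<in> carrier G" and a: "a \<in> carrier G" and ord: "ord x = ord a"
  obtains \<phi> where "\<phi> \<in> iso (G\<lparr>carrier := generate G {x}\<rparr>) (G\<lparr>carrier := generate G {a}\<rparr>)"
    and "\<phi> x = a"
proof -
  define \<phi> where "\<phi> u = a [^] (SOME k::int. u = x [^] k)" for u
  have same_pow: "x [^] k = x [^] l \<longleftrightarrow> a [^] k = a [^] l" for k l :: int
    using int_pow_eq[OF x] int_pow_eq[OF a] ord by simp
  have \<phi>_pow: "\<phi> (x [^] k) = a [^] k" for k :: int
    unfolding \<phi>_def using someI[of "\<lambda>l. x [^] k = x [^] l" k] same_pow by metis
  have gen_x: "generate G {x} = range (\<lambda>k::int. x [^] k)"
    using generate_pow[OF x] by blast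
  have gen_a: "generate G {a} = range (\<lambda>k::int. a [^] k)"
    using generate_pow[OF a] by blast
  have "\<phi> \<in> hom (G\<lparr>carrier := generate G {x}\<rparr>) (G\<lparr>carrier := generate G {a}\<rparr>)"
    by (rule homI) (auto simp: gen_x gen_a \<phi>_pow x a simp flip: int_pow_mult)
  moreover have "bij_betw \<phi> (generate G {x}) (generate G {a})"
    by (rule bij_betw_imageI)
      (auto simp: gen_x gen_a \<phi>_pow same_pow inj_on_def image_image)
  moreover have "\<phi> x = a"
    using \<phi>_pow[of 1] x a by simp
  ultimately show ?thesis
    using that by (simp add: iso_def)
qed

subsection \<open>Two-tuple regular groups\<close>

lemma defines_iso_pair_iff:
  "defines_iso G [x, g] [a, h] \<longleftrightarrow>
    (\<exists>\<phi> \<in> iso (G\<lparr>carrier := generate G {x, g}\<rparr>) (G\<lparr>carrier := generate G {a, h}\<rparr>). \<phi> x = a \<and> \<phi> g = h)"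
  unfolding defines_iso_def by (simp add: All_less_Suc Bex_def conj_commute)

lemma two_tuple_regular_extend:
  assumes reg: "two_tuple_regular G" and x: "x \<in> carrier G" and a: "a \<in> carrier G"
    and ord: "ord x = ord a"
  obtains \<Psi> where "bij_betw \<Psi> (carrier G) (carrier G)"
    and "\<And>g. g \<in> carrier G \<Longrightarrow> defines_iso G [x, g] [a, \<Psi> g]"
proof -
  obtain \<phi> where "\<phi> \<in> iso (G\<lparr>carrier := generate G {x}\<rparr>) (G\<lparr>carrier := generate G {a}\<rparr>)" "\<phi> x = a"
    using cyclic_subgroups_iso[OF x a ord] .
  then have "defines_iso G [x, x] [a, a]"
    by (auto simp: defines_iso_def nth_Cons')
  then obtain \<Psi> where bij: "bij_betw \<Psi> (carrier G) (carrier G)"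
    and ext: "\<forall>g \<in> carrier G. defines_iso G [x, x, g] [a, a, \<Psi> g]"
    using reg x a unfolding two_tuple_regular_def by blast
  show ?thesis
  proof (rule that[OF bij])
    fix g assume "g \<in> carrier G"
    then show "defines_iso G [x, g] [a, \<Psi> g]"
      using ext by (simp add: defines_iso_def All_less_Suc)
  qed
qed

lemma two_tuple_regular_root:
  assumes reg: "two_tuple_regular G" and x: "x \<in> carrier G" and y: "y \<in> carrier G"
    and ord: "ord y = n * ord x" and n: "n \<noteq> 0"
  shows "\<exists>z \<in> carrier G. x = z [^] n"
proof -
  have "ord (y [^] n) = ord x"
    using ord_pow[OF y, of n] ord n by simp
  then obtain \<Psi> where bij: "bij_betw \<Psi> (carrier G) (carrier G)"
    and ext: "\<And>g. g \<in> carrier G \<Longrightarrow> defines_iso G [y [^] n, g] [x, \<Psi> g]"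
    using two_tuple_regular_extend[OF reg _ x] y by blast
  obtain \<phi> where \<phi>: "\<phi> \<in> iso (G\<lparr>carrier := generate G {y [^] n, y}\<rparr>) (G\<lparr>carrier := generate G {x, \<Psi> y}\<rparr>)"
    and "\<phi> (y [^] n) = x" "\<phi> y = \<Psi> y"
    using ext[OF y] unfolding defines_iso_pair_iff by blast
  moreover have "y \<in> generate G {y [^] n, y}"
    by (simp add: generate.incl)
  moreover have "\<Psi> y \<in> carrier G"
    using bij_betw_apply[OF bij y] .
  ultimately show ?thesis
    using iso_subgroups_nat_pow[OF generate_is_subgroup generate_is_subgroup \<phi>] x y by auto
qed

lemma two_tuple_regular_commutator_pow:
  assumes reg: "two_tuple_regular G" and y: "y \<in> carrier G" and a: "a \<in> carrier G"
    and ord: "ord y = ord a"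
    and y_comm: "\<And>g. g \<in> carrier G \<Longrightarrow> commutator G g y [^] (n::nat) = \<one>"
    and g: "g \<in> carrier G"
  shows "commutator G g a [^] n = \<one>"
proof -
  obtain \<Psi> where bij: "bij_betw \<Psi> (carrier G) (carrier G)"
    and ext: "\<And>g. g \<in> carrier G \<Longrightarrow> defines_iso G [y, g] [a, \<Psi> g]"
    using two_tuple_regular_extend[OF reg y a ord] by blast
  obtain g0 where g0: "g0 \<in> carrier G" "g = \<Psi> g0"
    using bij g by (auto simp: bij_betw_def)
  obtain \<phi> where \<phi>: "\<phi> \<in> iso (G\<lparr>carrier := generate G {y, g0}\<rparr>) (G\<lparr>carrier := generate G {a, g}\<rparr>)"
    and \<phi>_gens: "\<phi> y = a" "\<phi> g0 = g"
    using ext[OF g0(1)] g0(2) unfolding defines_iso_pair_iff by blast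
  have sub: "subgroup (generate G {y, g0}) G" "subgroup (generate G {a, g}) G"
    using y g0 a g by (simp_all add: generate_is_subgroup)
  have gens: "y \<in> generate G {y, g0}" "g0 \<in> generate G {y, g0}"
    by (simp_all add: generate.incl)
  have "commutator G g0 y \<in> generate G {y, g0}"
    using subgroup_commutator_closed[OF sub(1) gens(2,1)] .
  from iso_subgroups_pow_eq_one_iff[OF sub \<phi> this, of n] show ?thesis
    using iso_subgroups_commutator[OF sub \<phi> gens(2,1)] y_comm[OF g0(1)] \<phi>_gens by simp
qed

lemma defines_iso_subgroup_iff:
  assumes "subgroup H G" "set gs \<subseteq> H" "set hs \<subseteq> H"
  shows "defines_iso (G\<lparr>carrier := H\<rparr>) gs hs \<longleftrightarrow> defines_iso G gs hs"
  using assms by (simp add: defines_iso_def generate_consistent)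

lemma defines_iso_torsion_iff:
  assumes "defines_iso G gs hs" "set gs \<subseteq> carrier G" "set hs \<subseteq> carrier G" "k < length gs"
  shows "hs ! k \<in> torsion G n \<longleftrightarrow> gs ! k \<in> torsion G n"
proof -
  obtain \<phi> where \<phi>: "\<phi> \<in> iso (G\<lparr>carrier := generate G (set gs)\<rparr>) (G\<lparr>carrier := generate G (set hs)\<rparr>)"
    and \<phi>_k: "\<phi> (gs ! k) = hs ! k" and "length gs = length hs"
    using assms(1,4) unfolding defines_iso_def by blast
  have "gs ! k \<in> generate G (set gs)"
    using assms(4) by (simp add: generate.incl)
  then have "hs ! k [^] n = \<one> \<longleftrightarrow> gs ! k [^] n = \<one>"
    using iso_subgroups_pow_eq_one_iff[OF generate_is_subgroup generate_is_subgroup \<phi>, of "gs ! k" n]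
      \<phi>_k assms(2,3) by simp
  moreover have "gs ! k \<in> carrier G" "hs ! k \<in> carrier G"
    using assms(2-4) \<open>length gs = length hs\<close> by (auto dest: nth_mem)
  ultimately show ?thesis
    by (simp add: torsion_def)
qed

lemma two_tuple_regular_torsion_subgroup:
  assumes reg: "two_tuple_regular G" and sub: "subgroup (torsion G n) G"
  shows "two_tuple_regular (G\<lparr>carrier := torsion G n\<rparr>)"
  unfolding two_tuple_regular_def
proof (intro ballI impI)
  let ?T = "torsion G n"
  fix g1 g2 h1 h2
  assume gens: "g1 \<in> carrier (G\<lparr>carrier := ?T\<rparr>)" "g2 \<in> carrier (G\<lparr>carrier := ?T\<rparr>)"
    "h1 \<in> carrier (G\<lparr>carrier := ?T\<rparr>)" "h2 \<in> carrier (G\<lparr>carrier := ?T\<rparr>)"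
    and "defines_iso (G\<lparr>carrier := ?T\<rparr>) [g1, g2] [h1, h2]"
  then have "defines_iso G [g1, g2] [h1, h2]"
    by (simp add: defines_iso_subgroup_iff[OF sub])
  moreover have carrier: "g1 \<in> carrier G" "g2 \<in> carrier G" "h1 \<in> carrier G" "h2 \<in> carrier G"
    using gens torsion_subset by auto
  ultimately obtain \<Psi> where bij: "bij_betw \<Psi> (carrier G) (carrier G)"
    and ext: "\<forall>g \<in> carrier G. defines_iso G [g1, g2, g] [h1, h2, \<Psi> g]"
    using reg unfolding two_tuple_regular_def by blast
  have \<Psi>_torsion: "\<Psi> g \<in> ?T \<longleftrightarrow> g \<in> ?T" if g: "g \<in> carrier G" for g
    using defines_iso_torsion_iff[OF ext[rule_format, OF g], of 2 n] carrier g bij_betw_apply[OF bij g]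
    by simp
  have "bij_betw \<Psi> ?T ?T"
    using bij_betw_invariant_subset[OF bij torsion_subset \<Psi>_torsion] .
  moreover have "defines_iso (G\<lparr>carrier := ?T\<rparr>) [g1, g2, g] [h1, h2, \<Psi> g]" if g: "g \<in> ?T" for g
  proof -
    have "g \<in> carrier G" "\<Psi> g \<in> ?T"
      using g torsion_subset \<Psi>_torsion by auto
    then show ?thesis
      using ext g gens defines_iso_subgroup_iff[OF sub, of "[g1, g2, g]" "[h1, h2, \<Psi> g]"] by simp
  qed
  ultimately show "\<exists>\<Psi>. bij_betw \<Psi> (carrier (G\<lparr>carrier := ?T\<rparr>)) (carrier (G\<lparr>carrier := ?T\<rparr>)) \<and>
      (\<forall>g\<in>carrier (G\<lparr>carrier := ?T\<rparr>). defines_iso (G\<lparr>carrier := ?T\<rparr>) [g1, g2, g] [h1, h2, \<Psi> g])"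
    by auto
qed

subsection \<open>Torsion subgroups of a two-tuple regular p-group\<close>

lemma torsion_prime_power_Suc_subgroup:
  fixes p :: nat
  assumes reg: "two_tuple_regular G" and fin: "finite (carrier G)" and p: "Factorial_Ring.prime p"
    and exp: "\<And>x. x \<in> carrier G \<Longrightarrow> x [^] (p ^ s) = \<one>"
    and sub: "subgroup (torsion G (p ^ i)) G"
  shows "subgroup (torsion G (p ^ Suc i)) G"
proof -
  define N where "N = torsion G (p ^ i)"
  have N: "N \<lhd> G"
    unfolding N_def by (rule torsion_normal[OF sub])
  have torsion_Suc: "torsion G (p ^ Suc i) = {a \<in> carrier G. a [^] p \<in> N}"
    by (auto simp: N_def torsion_def nat_pow_pow)
  have ord_outside_N: "ord a = p ^ Suc i" if "a \<in> carrier G" "a [^] p \<in> N" "a \<notin> N" for a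
    using that ord_eq_prime_power_Suc[OF p, of a i] by (simp add: N_def torsion_def nat_pow_pow)
  show ?thesis
  proof (cases "N = carrier G")
    case True
    then have "torsion G (p ^ Suc i) = carrier G"
      using torsion_Suc by auto
    then show ?thesis
      using subgroup_self by simp
  next
    case False
    then obtain y where y: "y \<in> carrier G" "y \<notin> N" "y [^] p \<in> N"
      and y_central: "\<And>g. g \<in> carrier G \<Longrightarrow> commutator G g y \<in> N"
      using exists_central_mod_normal[OF fin p exp N] by blast
    have "commutator G g a \<in> N" if a: "a \<in> carrier G" "a [^] p \<in> N" and g: "g \<in> carrier G" for a g
    proof (cases "a \<in> N")
      case True
      then show ?thesis
        using commutator_in_normal[OF N g] by blast
    next
      case False
      have "ord y = ord a"
        using ord_outside_N y a False by simp
      then show ?thesis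
        using two_tuple_regular_commutator_pow[OF reg y(1) a(1) _ _ g, of "p ^ i"] y_central a g
        by (simp add: N_def torsion_def)
    qed
    then show ?thesis
      unfolding torsion_Suc by (rule pow_preimage_subgroup_if_central_mod[OF N])
  qed
qed

lemma torsion_prime_power_subgroup:
  fixes p :: nat
  assumes "two_tuple_regular G" "finite (carrier G)" "Factorial_Ring.prime p"
    and "\<And>x. x \<in> carrier G \<Longrightarrow> x [^] (p ^ s) = \<one>"
  shows "subgroup (torsion G (p ^ i)) G"
proof (induction i)
  case 0
  have "torsion G (p ^ 0) = {\<one>}"
    by (auto simp: torsion_def)
  then show ?case
    using triv_subgroup by simp
next
  case (Suc i)
  then show ?case
    using torsion_prime_power_Suc_subgroup[OF assms] by blast
qed

lemma torsion_prime_power_root: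
  fixes p :: nat
  assumes reg: "two_tuple_regular G" and p: "Factorial_Ring.prime p"
    and y: "y \<in> carrier G" "ord y = p ^ s" and i: "i \<le> s" and x: "x \<in> torsion G (p ^ i)"
  shows "\<exists>z \<in> carrier G. x = z [^] p ^ (s - i)"
proof -
  have x_carrier: "x \<in> carrier G" and "ord x dvd p ^ i"
    using x pow_eq_id by (auto simp: torsion_def)
  then obtain j where j: "j \<le> i" "ord x = p ^ j"
    using divides_primepow_nat[OF p] by blast
  have "ord y = p ^ (s - j) * ord x"
    using y(2) j i by (simp flip: power_add)
  moreover have "p ^ (s - j) \<noteq> 0"
    using p by (simp add: prime_gt_0_nat)
  ultimately obtain z where z: "z \<in> carrier G" "x = z [^] p ^ (s - j)"
    using two_tuple_regular_root[OF reg x_carrier y(1)] by blast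
  have "p ^ (s - j) = p ^ (i - j) * p ^ (s - i)"
    using j i by (simp flip: power_add)
  then have "x = (z [^] p ^ (i - j)) [^] p ^ (s - i)"
    using z by (simp add: nat_pow_pow)
  then show ?thesis
    using z(1) by blast
qed

end

theorem lemma4p5:
  fixes G :: "('a, 'b) monoid_scheme" and p s :: nat
  assumes "Factorial_Ring.prime p"
    and "group G" and "finite (carrier G)"
    and "two_tuple_regular G"
    and "group_exponent G = p ^ s"
  shows "\<forall>i \<le> s.
           (\<forall>x \<in> Omega G p i. group.ord G x \<le> p ^ i \<and>
               (\<exists>y \<in> carrier G. x = y [^]\<^bsub>G\<^esub> (p ^ (s - i))))
         \<and> two_tuple_regular (G\<lparr>carrier := Omega G p i\<rparr>)"
proof -
  interpret group G by fact
  note p = assms(1) and fin = assms(3) and reg = assms(4) and exponent = assms(5)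
  have exp: "x [^]\<^bsub>G\<^esub> (p ^ s) = \<one>\<^bsub>G\<^esub>" if "x \<in> carrier G" for x
    using ord_dvd_group_exponent[OF that] exponent pow_eq_id[OF that] by simp
  have Omega: "Omega G p i = torsion G (p ^ i)" for i
    using generate_subgroup_eq[OF torsion_prime_power_subgroup[OF reg fin p exp]]
    by (simp add: Omega_def torsion_def)
  obtain y where y: "y \<in> carrier G" "group.ord G y = p ^ s"
    using exists_ord_eq_prime_power_exponent[OF p exponent] by blast
  show ?thesis
  proof (intro allI impI conjI ballI)
    fix i x assume i: "i \<le> s" and "x \<in> Omega G p i"
    then have x: "x \<in> torsion G (p ^ i)"
      by (simp add: Omega)
    then have "group.ord G x dvd p ^ i"
      using pow_eq_id by (auto simp: torsion_def)
    then show "group.ord G x \<le> p ^ i"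
      using p by (simp add: dvd_imp_le prime_gt_0_nat)
    show "\<exists>z \<in> carrier G. x = z [^]\<^bsub>G\<^esub> p ^ (s - i)"
      using torsion_prime_power_root[OF reg p y i x] .
  next
    fix i
    show "two_tuple_regular (G\<lparr>carrier := Omega G p i\<rparr>)"
      using two_tuple_regular_torsion_subgroup[OF reg torsion_prime_power_subgroup[OF reg fin p exp]]
      by (simp add: Omega)
  qed
qed

end
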